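(* For $0<y<x\le1$ let $$f(x,y)=x^2y^2\,\frac{2(2-x-y)-\frac{(x-y)^2}{2-x-y}}{(x-y)^2},\qquad g(x,y)=x^2y^2\,\frac{2(2-x-y)-\frac{(x-y)^2}{2(2-x-y)}}{(x-y)^2},$$ $$B_2(x,y)=\frac{x+y+\frac14\,\frac{\left((x+y)\frac{f(x,y)}{xy}-xy\right)^2}{g(x,y)}}{\sqrt{x+\frac{g(x,y)}{xy}}}.$$ If $0<y<x\le1$, then $B_2(x,y)>0.9$. *)

theory Defs
  imports Complex_Main
begin

definition f4 :: "real \<Rightarrow> real \<Rightarrow> real" where
  "f4 x y = x^2 * y^2 * ((2 * (2 - x - y) - (x - y)^2 / (2 - x - y)) / (x - y)^2)"

definition g4 :: "real \<Rightarrow> real \<Rightarrow> real" where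
  "g4 x y = x^2 * y^2 * ((2 * (2 - x - y) - (x - y)^2 / (2 * (2 - x - y))) / (x - y)^2)"

definition B2 :: "real \<Rightarrow> real \<Rightarrow> real" where
  "B2 x y = (x + y + (1/4) * ((x + y) * f4 x y / (x * y) - x * y)^2 / g4 x y)
            / sqrt (x + g4 x y / (x * y))"

end

theory Submission
  imports Defs
begin

(* Put s = 2 - x - y and d = x - y.  Then B2 x y = (x + y + T) / sqrt (x + R) with
   T = 2((x+y)s^2 - d^2)^2 / (s d^2 (4s^2 - d^2)) and R = xy(4s^2 - d^2) / (2 s d^2).
   Replacing the factor 4s^2 - d^2 in T by the larger 4s^2 strictly decreases T, and for
   the resulting numerator x + y + L the squared inequality (9/10)^2 (x + R) <= (x + y + L)^2
   becomes, after clearing the denominator 2 s^3 d^2, a polynomial inequality in x and y.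
   Expanded in the variables y, x - y, 1 - x, which are nonnegative on the domain, the
   difference of its two sides has only nonnegative coefficients. *)

definition certificate_poly :: "real \<Rightarrow> real \<Rightarrow> real \<Rightarrow> real" where
  "certificate_poly a b c =
    256*b^4*c^8 + (26816/25)*b^5*c^7 + (45664/25)*b^6*c^6 + (40608/25)*b^7*c^5 +
    817*b^8*c^4 + (1196/5)*b^9*c^3 + (1068/25)*b^10*c^2 + (147/25)*b^11*c + (19/25)*b^12 +
    (30464/25)*a*b^3*c^8 + (144704/25)*a*b^4*c^7 + (270736/25)*a*b^5*c^6 +
    (262408/25)*a*b^6*c^5 + (29232/5)*a*b^7*c^4 + (49412/25)*a*b^8*c^3 +
    (10457/25)*a*b^9*c^2 + (2781/50)*a*b^10*c + (233/50)*a*b^11 + (132864/25)*a^2*b^2*c^8 +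
    (577152/25)*a^2*b^3*c^7 + (1018896/25)*a^2*b^4*c^6 + (949032/25)*a^2*b^5*c^5 +
    (102136/5)*a^2*b^6*c^4 + (164812/25)*a^2*b^7*c^3 + (31851/25)*a^2*b^8*c^2 +
    (6761/50)*a^2*b^9*c + (176/25)*a^2*b^10 + 8192*a^3*b*c^8 + (849664/25)*a^3*b^2*c^7 +
    (1437824/25)*a^3*b^3*c^6 + (1281232/25)*a^3*b^4*c^5 + (130344/5)*a^3*b^5*c^4 +
    (38776/5)*a^3*b^6*c^3 + (33212/25)*a^3*b^7*c^2 + (2837/25)*a^3*b^8*c +
    (157/50)*a^3*b^9 + 4096*a^4*c^8 + 16384*a^4*b*c^7 + 26624*a^4*b^2*c^6 +
    22528*a^4*b^3*c^5 + 10624*a^4*b^4*c^4 + 2816*a^4*b^5*c^3 + 416*a^4*b^6*c^2 +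
    32*a^4*b^7*c + a^4*b^8"

lemma certificate_poly_nonneg:
  fixes a b c :: real
  assumes "0 \<le> a" "0 \<le> b" "0 \<le> c"
  shows "0 \<le> certificate_poly a b c"
  unfolding certificate_poly_def
  using assms by (intro add_nonneg_nonneg mult_nonneg_nonneg zero_le_power) simp_all

lemma certificate_poly_identity:
  fixes x y :: real
  defines "s \<equiv> 2 - x - y" and "d \<equiv> x - y"
  shows "(2*s^3*d^2*(x+y) + ((x+y)*s^2 - d^2)^2)^2
           - 81/100 * (4*x*s^6*d^4 + 2*x*y*(4*s^2 - d^2)*s^5*d^2)
         = certificate_poly y (x - y) (1 - x)"
  unfolding certificate_poly_def s_def d_def by algebra

lemma B2_polynomial_bound:
  fixes x y :: real
  defines "s \<equiv> 2 - x - y" and "d \<equiv> x - y"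
  assumes "0 \<le> y" "y \<le> x" "x \<le> 1"
  shows "81/100 * (4*x*s^6*d^4 + 2*x*y*(4*s^2 - d^2)*s^5*d^2)
           \<le> (2*s^3*d^2*(x+y) + ((x+y)*s^2 - d^2)^2)^2"
proof -
  have "0 \<le> certificate_poly y (x - y) (1 - x)"
    using assms by (intro certificate_poly_nonneg) simp_all
  then show ?thesis
    using certificate_poly_identity[of x y] unfolding s_def d_def by linarith
qed

lemma f4_eq:
  fixes x y :: real
  defines "s \<equiv> 2 - x - y" and "d \<equiv> x - y"
  assumes "y < x" "x + y < 2"
  shows "f4 x y = (x*y)^2 * (2*s^2 - d^2) / (s*d^2)"
proof -
  have "s \<noteq> 0" "d \<noteq> 0" using assms by simp_all
  then show ?thesis
    unfolding f4_def s_def[symmetric] d_def[symmetric]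
    by (simp add: field_simps power2_eq_square)
qed

lemma g4_eq:
  fixes x y :: real
  defines "s \<equiv> 2 - x - y" and "d \<equiv> x - y"
  assumes "y < x" "x + y < 2"
  shows "g4 x y = (x*y)^2 * (4*s^2 - d^2) / (2*s*d^2)"
proof -
  have "s \<noteq> 0" "d \<noteq> 0" using assms by simp_all
  then show ?thesis
    unfolding g4_def s_def[symmetric] d_def[symmetric]
    by (simp add: field_simps power2_eq_square)
qed

lemma diff_square_less_four_mul:
  fixes x y :: real
  assumes "y < x" "x \<le> 1"
  shows "(x - y)^2 < 4 * (2 - x - y)^2"
proof -
  have "(x - y)^2 < (2 * (2 - x - y))^2"
    using assms by (intro power_strict_mono) simp_all
  also have "\<dots> = 4 * (2 - x - y)^2" by algebra
  finally show ?thesis .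
qed

lemma B2_closed_form:
  fixes x y :: real
  defines "s \<equiv> 2 - x - y" and "d \<equiv> x - y"
  assumes "0 < y" "y < x" "x \<le> 1"
  shows "B2 x y = (x + y + 2*((x+y)*s^2 - d^2)^2 / (s*d^2*(4*s^2 - d^2)))
                  / sqrt (x + x*y*(4*s^2 - d^2) / (2*s*d^2))"
proof -
  have s: "s > 0" and d: "d > 0" and p: "x > 0" "y > 0" using assms by simp_all
  have f: "f4 x y = (x*y)^2 * (2*s^2 - d^2) / (s*d^2)"
    and g: "g4 x y = (x*y)^2 * (4*s^2 - d^2) / (2*s*d^2)"
    using f4_eq g4_eq assms by simp_all
  have "(x+y) * (2*s^2 - d^2) - s*d^2 = 2*((x+y)*s^2 - d^2)"
    unfolding s_def by algebra
  moreover have "(x+y) * f4 x y / (x*y) - x*y = x*y*((x+y) * (2*s^2 - d^2) - s*d^2) / (s*d^2)"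
    unfolding f using s d p by (simp add: field_simps power2_eq_square)
  ultimately have h: "(x+y) * f4 x y / (x*y) - x*y = 2*(x*y)*((x+y)*s^2 - d^2) / (s*d^2)"
    by simp
  have quotient: "(1/4) * (2*P*D / S)^2 / (P^2 * Q / (2*S)) = 2*D^2 / (S*Q)"
    if "P \<noteq> 0" "S \<noteq> 0" for P D S Q :: real
    using that by (simp add: field_simps power2_eq_square)
  have "(1/4) * ((x+y) * f4 x y / (x*y) - x*y)^2 / g4 x y
        = (1/4) * (2*(x*y)*((x+y)*s^2 - d^2) / (s*d^2))^2
            / ((x*y)^2 * (4*s^2 - d^2) / (2*(s*d^2)))"
    unfolding h g by (simp only: mult.assoc)
  also have "\<dots> = 2*((x+y)*s^2 - d^2)^2 / (s*d^2*(4*s^2 - d^2))"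
    using s d p by (subst quotient) (simp_all add: mult.assoc)
  finally have "(1/4) * ((x+y) * f4 x y / (x*y) - x*y)^2 / g4 x y
             = 2*((x+y)*s^2 - d^2)^2 / (s*d^2*(4*s^2 - d^2))" .
  moreover have "g4 x y / (x*y) = x*y*(4*s^2 - d^2) / (2*s*d^2)"
    unfolding g using p by (simp add: power2_eq_square)
  ultimately show ?thesis by (simp add: B2_def)
qed

lemma B2_numerator_square_bound:
  fixes x y :: real
  defines "s \<equiv> 2 - x - y" and "d \<equiv> x - y"
  assumes "0 < y" "y < x" "x \<le> 1"
  shows "81/100 * (x + x*y*(4*s^2 - d^2) / (2*s*d^2))
           \<le> (x + y + ((x+y)*s^2 - d^2)^2 / (2*s^3*d^2))^2"
proof -
  define k where "k = 2*s^3*d^2"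
  have s: "s > 0" and d: "d > 0" using assms by simp_all
  then have k: "k > 0" by (simp add: k_def)
  have "(x + x*y*(4*s^2 - d^2) / (2*s*d^2)) * k^2
        = 4*x*s^6*d^4 + 2*x*y*(4*s^2 - d^2)*s^5*d^2"
    using s d by (simp add: k_def field_simps power2_eq_square) algebra
  moreover have "(x + y + ((x+y)*s^2 - d^2)^2 / (2*s^3*d^2)) * k
                 = 2*s^3*d^2*(x+y) + ((x+y)*s^2 - d^2)^2"
    using s d by (simp add: k_def field_simps)
  moreover have "81/100 * (4*x*s^6*d^4 + 2*x*y*(4*s^2 - d^2)*s^5*d^2)
                 \<le> (2*s^3*d^2*(x+y) + ((x+y)*s^2 - d^2)^2)^2"
    using B2_polynomial_bound[of y x] assms unfolding s_def d_def by simp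
  ultimately have "81/100 * ((x + x*y*(4*s^2 - d^2) / (2*s*d^2)) * k^2)
                   \<le> ((x + y + ((x+y)*s^2 - d^2)^2 / (2*s^3*d^2)) * k)^2"
    by (simp only:)
  then show ?thesis
    using k by (simp add: power_mult_distrib mult.assoc[symmetric])
qed

lemma diff_square_less:
  fixes x y :: real
  assumes "0 < y" "y < x" "x \<le> 1"
  shows "(x - y)^2 < (x + y) * (2 - x - y)^2"
proof (cases "2 - x - y \<ge> 1")
  case True
  have "(x - y)^2 \<le> x - y"
    using assms by (simp add: power2_eq_square mult_le_one)
  also have "\<dots> < x + y" using assms by simp
  also have "\<dots> \<le> (x + y) * (2 - x - y)^2"
    using True assms by (simp add: one_le_power)
  finally show ?thesis .
next
  case False
  have "(x - y)^2 \<le> (2 - x - y)^2"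
    using assms by (intro power_mono) simp_all
  also have "\<dots> < (x + y) * (2 - x - y)^2"
    using False assms by simp
  finally show ?thesis .
qed

lemma B2_correction_less:
  fixes x y :: real
  defines "s \<equiv> 2 - x - y" and "d \<equiv> x - y"
  assumes "0 < y" "y < x" "x \<le> 1"
  shows "((x+y)*s^2 - d^2)^2 / (2*s^3*d^2) < 2*((x+y)*s^2 - d^2)^2 / (s*d^2*(4*s^2 - d^2))"
proof -
  have s: "s > 0" and d: "d > 0" using assms by simp_all
  have q: "4*s^2 - d^2 > 0"
    using diff_square_less_four_mul[OF assms(4,5)] by (simp add: s_def d_def)
  have "((x+y)*s^2 - d^2)^2 > 0"
    using diff_square_less[OF assms(3-5)] unfolding s_def d_def by simp
  moreover have "s*d^2*(4*s^2 - d^2) < 2*(2*s^3*d^2)"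
    using s d by (simp add: algebra_simps power2_eq_square power3_eq_cube)
  ultimately have "2*((x+y)*s^2 - d^2)^2 / (2*(2*s^3*d^2))
                   < 2*((x+y)*s^2 - d^2)^2 / (s*d^2*(4*s^2 - d^2))"
    using s d q by (intro divide_strict_left_mono) simp_all
  then show ?thesis by (simp add: mult_ac)
qed

lemma less_divide_sqrt_if_square_le:
  fixes a b c q :: real
  assumes "0 \<le> c" "0 < q" "c^2 * q \<le> a^2" "0 \<le> a" "a < b"
  shows "c < b / sqrt q"
proof -
  have "c * sqrt q = sqrt (c^2 * q)"
    using assms(1) by (simp add: real_sqrt_mult)
  also have "\<dots> \<le> a"
    using assms(3,4) real_sqrt_le_mono by fastforce
  finally have "c * sqrt q < b" using assms(5) by simp
  then show ?thesis
    using assms(2) by (simp add: pos_less_divide_eq)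
qed

theorem lemma4:
  fixes x y :: real
  assumes "0 < y" and "y < x" and "x \<le> 1"
  shows "B2 x y > 0.9"
proof -
  define s d where "s = 2 - x - y" and "d = x - y"
  define R where "R = x*y*(4*s^2 - d^2) / (2*s*d^2)"
  define L where "L = ((x+y)*s^2 - d^2)^2 / (2*s^3*d^2)"
  define T where "T = 2*((x+y)*s^2 - d^2)^2 / (s*d^2*(4*s^2 - d^2))"
  have B2: "B2 x y = (x + y + T) / sqrt (x + R)"
    using B2_closed_form[OF assms] by (simp add: s_def d_def R_def T_def)
  have "(0.9::real)^2 * (x + R) \<le> (x + y + L)^2"
    using B2_numerator_square_bound[OF assms] by (simp add: s_def d_def R_def L_def power2_eq_square)
  moreover have "L < T"
    using B2_correction_less[OF assms] by (simp add: s_def d_def L_def T_def)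
  moreover have "0 \<le> L" and "0 < R"
    using assms diff_square_less_four_mul[OF assms(2,3)] by (simp_all add: L_def R_def s_def d_def)
  ultimately show ?thesis
    unfolding B2 using assms by (intro less_divide_sqrt_if_square_le[where a = "x + y + L"]) simp_all
qed

end
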